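(* Let $k\ge 0$, $n\ge 1$, let $G\sim\mathcal G_n^k$ and let $E$ be the number of edges of $G$. Then $\mathbb E[E]=\binom n2$ for $n\le k+2$, and for $n\ge k+3$ $$\mathbb E[E]=\frac12(k+1)\left(4n-3k-6-2(k+2)\sum_{l=k+3}^{n}\frac1l\right)=(k+1)(2n-o(n)).$$ Moreover, for every $t\ge 0$, $$\mathbb P\big(|E-\mathbb E[E]|>(k+1)t\big)\le 2\exp\left(-\frac{2t^2}{n}\right).$$
   Context: A semi-bar $k$-visibility representation is a finite collection of pairwise disjoint closed horizontal segments (bars) in the plane whose left endpoints all lie on one common vertical line; two bars are adjacent if there is a vertical segment with endpoints on the two bars intersecting at most $k$ other bars; the semi-bar $k$-visibility graph has one vertex per bar. $\mathcal G_n^k$ is the distribution of the random semi-bar $k$-visibility graph on $n$ vertices obtained from $n$ bars at $n$ distinct heights whose left endpoints lie at $x=0$ and whose right endpoints are drawn i.i.d. uniformly from $(0,1)$ (equivalently, the relative order of the bar lengths from top to bottom is a uniformly random permutation in $S_n$). *)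

theory Defs
  imports "HOL-Probability.Probability" "HOL-Combinatorics.Permutations" "HOL-Library.Landau_Symbols"
begin

text \<open>Bars are indexed by their heights 0,...,n-1; every bar has its left endpoint at x = 0
  and bar l is the closed segment [0, len l] at height l.  A vertical segment at abscissa x
  joining bars i and j lies on both bars iff 0 <= x <= min (len i) (len j), and it meets
  exactly those bars l strictly between i and j (in height) with x <= len l.\<close>

definition sbv_adj :: "nat \<Rightarrow> (nat \<Rightarrow> real) \<Rightarrow> nat \<Rightarrow> nat \<Rightarrow> bool" where
  "sbv_adj k len i j \<longleftrightarrow> i \<noteq> j \<and>
     (\<exists>x::real. 0 \<le> x \<and> x \<le> len i \<and> x \<le> len j \<and>
        card {l. min i j < l \<and> l < max i j \<and> x \<le> len l} \<le> k)"

definition sbv_num_edges :: "nat \<Rightarrow> nat \<Rightarrow> (nat \<Rightarrow> real) \<Rightarrow> nat" where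
  "sbv_num_edges k n len = card {(i, j). i < j \<and> j < n \<and> sbv_adj k len i j}"

definition random_bar_lengths :: "nat \<Rightarrow> (nat \<Rightarrow> real) pmf" where
  "random_bar_lengths n =
     map_pmf (\<lambda>\<sigma> l. (real (\<sigma> l) + 1) / (real n + 1))
             (pmf_of_set {\<sigma>. \<sigma> permutes {..<n}})"

definition sbv_edges_pmf :: "nat \<Rightarrow> nat \<Rightarrow> nat pmf" where
  "sbv_edges_pmf k n = map_pmf (sbv_num_edges k n) (random_bar_lengths n)"

definition sbv_expected_edges :: "nat \<Rightarrow> nat \<Rightarrow> real" where
  "sbv_expected_edges k n = measure_pmf.expectation (sbv_edges_pmf k n) real"

end

theory Submission
  imports Defs "HOL-Real_Asymp.Real_Asymp"
begin

text \<open>Only the relative order of the bar lengths matters, so build the random ranking by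
  inserting the bars from the longest to the shortest: the r-th bar inserted is shorter than
  all earlier ones and lands at a uniformly random position g among the r + 1 gaps, independently
  of the past. A shortest bar blocks no sight line, so the edges among earlier bars persist, and
  the new bar sees exactly the k + 1 nearest bars on either side. Hence
  E = \<Sum>r<n. min (k+1) (g r) + min (k+1) (r - g r) is a sum of independent terms, each
  ranging in an interval of length k + 1. Averaging the terms gives the expectation, and
  Hoeffding's inequality gives the concentration.\<close>

section \<open>Visibility in terms of ranks\<close>

definition rank_visible :: "nat \<Rightarrow> (nat \<Rightarrow> nat) \<Rightarrow> nat \<Rightarrow> nat \<Rightarrow> bool" where
  "rank_visible k \<sigma> i j \<longleftrightarrow> card {l. i < l \<and> l < j \<and> min (\<sigma> i) (\<sigma> j) \<le> \<sigma> l} \<le> k"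

definition rank_edges :: "nat \<Rightarrow> nat \<Rightarrow> (nat \<Rightarrow> nat) \<Rightarrow> nat" where
  "rank_edges k n \<sigma> = card {(i, j). i < j \<and> j < n \<and> rank_visible k \<sigma> i j}"

text \<open>The highest sight line, at the length of the shorter endpoint bar, crosses the fewest bars.\<close>

lemma sbv_adj_iff_min_length:
  fixes len :: "nat \<Rightarrow> real"
  assumes "i < j" "0 \<le> len i" "0 \<le> len j"
  shows "sbv_adj k len i j \<longleftrightarrow> card {l. i < l \<and> l < j \<and> min (len i) (len j) \<le> len l} \<le> k"
proof
  assume "sbv_adj k len i j"
  then obtain x where x: "0 \<le> x" "x \<le> len i" "x \<le> len j"
    "card {l. min i j < l \<and> l < max i j \<and> x \<le> len l} \<le> k"
    by (auto simp: sbv_adj_def)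
  have "card {l. i < l \<and> l < j \<and> min (len i) (len j) \<le> len l}
      \<le> card {l. min i j < l \<and> l < max i j \<and> x \<le> len l}"
    using assms x by (intro card_mono) auto
  with x show "card {l. i < l \<and> l < j \<and> min (len i) (len j) \<le> len l} \<le> k" by linarith
next
  assume "card {l. i < l \<and> l < j \<and> min (len i) (len j) \<le> len l} \<le> k"
  then show "sbv_adj k len i j"
    unfolding sbv_adj_def using assms
    by (intro conjI exI[of _ "min (len i) (len j)"]) (auto simp: min_def max_def)
qed

lemma sbv_num_edges_strict_mono_ranks:
  fixes h :: "nat \<Rightarrow> real"
  assumes "strict_mono h" "\<And>x. 0 \<le> h x"
  shows "sbv_num_edges k n (h \<circ> \<sigma>) = rank_edges k n \<sigma>"
proof -
  have min_h: "min (h a) (h b) \<le> h c \<longleftrightarrow> min a b \<le> c" for a b c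
    using strict_mono_less_eq[OF assms(1)] by (auto simp: min_def)
  have "sbv_adj k (h \<circ> \<sigma>) i j \<longleftrightarrow> rank_visible k \<sigma> i j" if "i < j" for i j
    using that assms(2) by (simp add: sbv_adj_iff_min_length min_h rank_visible_def)
  then show ?thesis
    unfolding sbv_num_edges_def rank_edges_def by (intro arg_cong[where f = card]) auto
qed

section \<open>Inserting a shortest bar\<close>

definition shift_from :: "nat \<Rightarrow> nat \<Rightarrow> nat" where
  "shift_from p l = (if l < p then l else Suc l)"

definition unshift_from :: "nat \<Rightarrow> nat \<Rightarrow> nat" where
  "unshift_from p l = (if l < p then l else l - 1)"

text \<open>Ranking after inserting a new bar of rank 0 (the shortest) at height p; the old bars
  above p move up by one and all old ranks increase by one.\<close>

definition insert_shortest :: "nat \<Rightarrow> (nat \<Rightarrow> nat) \<Rightarrow> nat \<Rightarrow> nat" where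
  "insert_shortest p \<sigma> l = (if l = p then 0 else Suc (\<sigma> (unshift_from p l)))"

definition new_edges :: "nat \<Rightarrow> nat \<Rightarrow> nat \<Rightarrow> nat" where
  "new_edges k n p = min (k + 1) p + min (k + 1) (n - p)"

lemma shift_from_less_iff [simp]: "shift_from p a < shift_from p b \<longleftrightarrow> a < b"
  by (auto simp: shift_from_def)

lemma shift_from_neq [simp]: "shift_from p a \<noteq> p"
  by (auto simp: shift_from_def)

lemma inj_shift_from: "inj (shift_from p)"
  by (auto simp: inj_def shift_from_def split: if_splits)

lemma shift_unshift_from: "l \<noteq> p \<Longrightarrow> shift_from p (unshift_from p l) = l"
  by (auto simp: shift_from_def unshift_from_def)

lemma insert_shortest_shift_from [simp]:
  "insert_shortest p \<sigma> (shift_from p x) = Suc (\<sigma> x)"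
  by (auto simp: insert_shortest_def shift_from_def unshift_from_def)

lemma insert_shortest_eq_0_iff: "insert_shortest p \<sigma> l = 0 \<longleftrightarrow> l = p"
  by (simp add: insert_shortest_def)

lemma insert_shortest_same [simp]: "insert_shortest p \<sigma> p = 0"
  by (simp add: insert_shortest_def)

lemma rank_visible_insert_shortest_shift_from:
  "rank_visible k (insert_shortest p \<sigma>) (shift_from p i) (shift_from p j) \<longleftrightarrow> rank_visible k \<sigma> i j"
proof -
  let ?blocking = "\<lambda>\<tau> i j. {l. i < l \<and> l < j \<and> min (\<tau> i) (\<tau> j) \<le> \<tau> l}"
  have "?blocking (insert_shortest p \<sigma>) (shift_from p i) (shift_from p j)
      = shift_from p ` ?blocking \<sigma> i j"
  proof (intro equalityI subsetI)
    fix l assume l: "l \<in> ?blocking (insert_shortest p \<sigma>) (shift_from p i) (shift_from p j)"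
    then have "l \<noteq> p" by (auto simp: insert_shortest_eq_0_iff)
    then have "l = shift_from p (unshift_from p l)" by (simp add: shift_unshift_from)
    with l show "l \<in> shift_from p ` ?blocking \<sigma> i j"
      by (metis (no_types, lifting) image_eqI insert_shortest_shift_from mem_Collect_eq
          min_Suc_Suc not_less_eq_eq shift_from_less_iff)
  qed auto
  then show ?thesis
    unfolding rank_visible_def
    by (simp add: card_image inj_on_subset[OF inj_shift_from])
qed

lemma card_neighbours_below: "card {i. i < p \<and> p - i \<le> k + 1} = min (k + 1) p"
proof -
  have "{i. i < p \<and> p - i \<le> k + 1} = {p - (k + 1)..<p}" by auto
  then show ?thesis by simp
qed

lemma card_neighbours_above:
  "p \<le> n \<Longrightarrow> card {j. p < j \<and> j \<le> n \<and> j - p \<le> k + 1} = min (k + 1) (n - p)"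
proof -
  have "{j. p < j \<and> j \<le> n \<and> j - p \<le> k + 1} = {p<..min n (p + k + 1)}" by auto
  then show ?thesis by simp
qed

lemma rank_visible_insert_shortest_from:
  assumes "p < j"
  shows "rank_visible k (insert_shortest p \<sigma>) p j \<longleftrightarrow> j - p \<le> k + 1"
proof -
  have "{l. p < l \<and> l < j} = {p<..<j}" by auto
  then show ?thesis
    using assms by (simp add: rank_visible_def insert_shortest_eq_0_iff) arith
qed

lemma rank_visible_insert_shortest_to:
  assumes "i < p"
  shows "rank_visible k (insert_shortest p \<sigma>) i p \<longleftrightarrow> p - i \<le> k + 1"
proof -
  have "{l. i < l \<and> l < p} = {i<..<p}" by auto
  then show ?thesis
    using assms by (simp add: rank_visible_def insert_shortest_eq_0_iff) arith
qed

lemma rank_edges_insert_shortest: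
  assumes "p \<le> n"
  shows "rank_edges k (Suc n) (insert_shortest p \<sigma>) = rank_edges k n \<sigma> + new_edges k n p"
proof -
  let ?\<tau> = "insert_shortest p \<sigma>"
  define E' where "E' = {(i, j). i < j \<and> j < Suc n \<and> rank_visible k ?\<tau> i j}"
  define E where "E = {(i, j). i < j \<and> j < n \<and> rank_visible k \<sigma> i j}"
  define Old where "Old = {e \<in> E'. fst e \<noteq> p \<and> snd e \<noteq> p}"
  define Below where "Below = {e \<in> E'. snd e = p}"
  define Above where "Above = {e \<in> E'. fst e = p}"
  have "finite E'"
    unfolding E'_def by (rule finite_subset[of _ "{..<Suc n} \<times> {..<Suc n}"]) auto
  then have "finite Old" "finite Below" "finite Above"
    by (simp_all add: Old_def Below_def Above_def)
  moreover have "Old \<inter> Below = {}" "(Old \<union> Below) \<inter> Above = {}"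
    by (auto simp: Old_def Below_def Above_def E'_def)
  moreover have "E' = Old \<union> Below \<union> Above"
    by (auto simp: Old_def Below_def Above_def)
  ultimately have card_E': "card E' = card Old + card Below + card Above"
    by (simp add: card_Un_disjoint)
  have Old_eq: "Old = map_prod (shift_from p) (shift_from p) ` E"
  proof (intro equalityI subsetI)
    fix e assume "e \<in> Old"
    then obtain i j where e: "e = (i, j)" "i \<noteq> p" "j \<noteq> p" "i < j" "j < Suc n"
      "rank_visible k ?\<tau> i j"
      by (auto simp: Old_def E'_def)
    define i' j' where "i' = unshift_from p i" and "j' = unshift_from p j"
    have i: "i = shift_from p i'" and j: "j = shift_from p j'"
      using e(2,3) by (simp_all add: i'_def j'_def shift_unshift_from)
    have "i' < j'"
      using e(4) by (simp add: i j)
    moreover have "j' < n"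
      using e(3,5) assms by (auto simp: j'_def unshift_from_def)
    moreover have "rank_visible k \<sigma> i' j'"
      using e(6) by (simp add: i j rank_visible_insert_shortest_shift_from)
    ultimately have "(i', j') \<in> E"
      by (simp add: E_def)
    then show "e \<in> map_prod (shift_from p) (shift_from p) ` E"
      using e(1) i j by force
  qed (use assms in \<open>auto simp: Old_def E'_def E_def rank_visible_insert_shortest_shift_from,
      auto simp: shift_from_def\<close>)
  have "inj (map_prod (shift_from p) (shift_from p))"
    by (simp add: prod.inj_map inj_shift_from)
  then have "card Old = rank_edges k n \<sigma>"
    unfolding Old_eq rank_edges_def E_def by (rule card_image[OF inj_on_subset]) simp
  moreover have "Below = (\<lambda>i. (i, p)) ` {i. i < p \<and> p - i \<le> k + 1}"
    using assms by (auto simp: Below_def E'_def rank_visible_insert_shortest_to)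
  then have "card Below = min (k + 1) p"
    using card_neighbours_below[of p k] by (simp add: card_image inj_on_def)
  moreover have "Above = (\<lambda>j. (p, j)) ` {j. p < j \<and> j \<le> n \<and> j - p \<le> k + 1}"
    using assms by (auto simp: Above_def E'_def rank_visible_insert_shortest_from)
  then have "card Above = min (k + 1) (n - p)"
    using card_neighbours_above[OF assms, of k] by (simp add: card_image inj_on_def)
  ultimately show ?thesis
    using card_E' by (simp add: rank_edges_def E'_def new_edges_def)
qed

lemma insert_shortest_permutes:
  assumes \<sigma>: "\<sigma> permutes {..<n}" and "p \<le> n"
  shows "insert_shortest p \<sigma> permutes {..<Suc n}"
proof (rule bij_imp_permutes)
  have "inj (insert_shortest p \<sigma>)"
  proof (rule injI)
    fix x y assume eq: "insert_shortest p \<sigma> x = insert_shortest p \<sigma> y"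
    show "x = y"
    proof (cases "x = p \<or> y = p")
      case True
      with eq show ?thesis by (auto simp: insert_shortest_eq_0_iff)
    next
      case False
      with eq have "\<sigma> (unshift_from p x) = \<sigma> (unshift_from p y)"
        by (simp add: insert_shortest_def)
      then have "unshift_from p x = unshift_from p y"
        using permutes_inj[OF \<sigma>] by (simp add: inj_eq)
      with False show ?thesis by (metis shift_unshift_from)
    qed
  qed
  then have "inj_on (insert_shortest p \<sigma>) {..<Suc n}"
    by (rule inj_on_subset) simp
  moreover have "insert_shortest p \<sigma> l < Suc n" if "l < Suc n" for l
  proof (cases "l = p")
    case False
    with that assms(2) have "unshift_from p l < n"
      by (auto simp: unshift_from_def)
    then have "\<sigma> (unshift_from p l) < n"
      using permutes_in_image[OF \<sigma>] by simp
    with False show ?thesis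
      by (simp add: insert_shortest_def)
  qed simp
  then have "insert_shortest p \<sigma> ` {..<Suc n} \<subseteq> {..<Suc n}"
    by auto
  ultimately show "bij_betw (insert_shortest p \<sigma>) {..<Suc n} {..<Suc n}"
    by (simp add: bij_betw_def endo_inj_surj)
next
  fix x assume "x \<notin> {..<Suc n}"
  then show "insert_shortest p \<sigma> x = x"
    using assms(2) permutes_not_in[OF \<sigma>, of "x - 1"]
    by (auto simp: insert_shortest_def unshift_from_def)
qed

lemma insert_shortest_inject:
  assumes "insert_shortest p \<sigma> = insert_shortest p' \<sigma>'"
  shows "p = p' \<and> \<sigma> = \<sigma>'"
proof -
  have "p = p'"
    using insert_shortest_eq_0_iff fun_cong[OF assms, of p] by metis
  moreover have "\<sigma> l = \<sigma>' l" for l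
    using fun_cong[OF assms, of "shift_from p l"] \<open>p = p'\<close> by simp
  ultimately show ?thesis by auto
qed

section \<open>Insertion codes\<close>

text \<open>g r is the height at which the (r+1)-st longest bar is inserted among the r longer ones;
  this is a Lehmer-type code of the ranking.\<close>

fun perm_of_code :: "nat \<Rightarrow> (nat \<Rightarrow> nat) \<Rightarrow> nat \<Rightarrow> nat" where
  "perm_of_code 0 g = id"
| "perm_of_code (Suc n) g = insert_shortest (g n) (perm_of_code n g)"

definition insertion_codes :: "nat \<Rightarrow> (nat \<Rightarrow> nat) set" where
  "insertion_codes n = PiE_dflt {..<n} 0 (\<lambda>r. {..r})"

lemma insertion_codes_iff:
  "g \<in> insertion_codes n \<longleftrightarrow> (\<forall>r<n. g r \<le> r) \<and> (\<forall>r\<ge>n. g r = 0)"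
  by (auto simp: insertion_codes_def PiE_dflt_def not_less)

lemma finite_insertion_codes: "finite (insertion_codes n)"
  unfolding insertion_codes_def by (rule finite_PiE_dflt) auto

lemma insertion_codes_nonempty: "insertion_codes n \<noteq> {}"
  using insertion_codes_iff[of "\<lambda>_. 0" n] by auto

lemma card_insertion_codes: "card (insertion_codes n) = fact n"
proof -
  have "card (insertion_codes n) = (\<Prod>r<n. Suc r)"
    unfolding insertion_codes_def by (subst card_PiE_dflt) auto
  also have "\<dots> = fact n"
    by (induction n) auto
  finally show ?thesis .
qed

lemma perm_of_code_permutes: "\<forall>r<n. g r \<le> r \<Longrightarrow> perm_of_code n g permutes {..<n}"
  by (induction n) (auto intro: insert_shortest_permutes permutes_id)

lemma perm_of_code_eqD: "perm_of_code n g = perm_of_code n g' \<Longrightarrow> \<forall>r<n. g r = g' r"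
  by (induction n) (auto simp: less_Suc_eq dest: insert_shortest_inject)

lemma rank_edges_perm_of_code:
  "\<forall>r<n. g r \<le> r \<Longrightarrow> rank_edges k n (perm_of_code n g) = (\<Sum>r<n. new_edges k r (g r))"
proof (induction n)
  case 0
  show ?case by (simp add: rank_edges_def)
next
  case (Suc n)
  then show ?case by (simp add: rank_edges_insert_shortest)
qed

lemma bij_betw_perm_of_code:
  "bij_betw (perm_of_code n) (insertion_codes n) {\<sigma>. \<sigma> permutes {..<n}}"
proof -
  have inj: "inj_on (perm_of_code n) (insertion_codes n)"
    by (rule inj_onI) (metis insertion_codes_iff perm_of_code_eqD ext not_less)
  moreover have "perm_of_code n ` insertion_codes n = {\<sigma>. \<sigma> permutes {..<n}}"
  proof (rule card_subset_eq)
    show "perm_of_code n ` insertion_codes n \<subseteq> {\<sigma>. \<sigma> permutes {..<n}}"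
      by (auto simp: insertion_codes_iff intro: perm_of_code_permutes)
  qed (simp_all add: finite_permutations card_image[OF inj] card_insertion_codes card_permutations)
  ultimately show ?thesis by (simp add: bij_betw_def)
qed

definition code_pmf :: "nat \<Rightarrow> (nat \<Rightarrow> nat) pmf" where
  "code_pmf n = Pi_pmf {..<n} 0 (\<lambda>r. pmf_of_set {..r})"

lemma sbv_edges_pmf_eq_code_sum:
  "sbv_edges_pmf k n = map_pmf (\<lambda>g. \<Sum>r<n. new_edges k r (g r)) (code_pmf n)"
proof -
  define h where "h x = (real x + 1) / (real n + 1)" for x :: nat
  have "strict_mono h"
    by (intro strict_monoI) (simp add: h_def divide_strict_right_mono)
  then have "sbv_num_edges k n (h \<circ> \<sigma>) = rank_edges k n \<sigma>" for \<sigma>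
    by (rule sbv_num_edges_strict_mono_ranks) (simp add: h_def)
  then have "sbv_edges_pmf k n = map_pmf (rank_edges k n) (pmf_of_set {\<sigma>. \<sigma> permutes {..<n}})"
    by (simp add: sbv_edges_pmf_def random_bar_lengths_def pmf.map_comp comp_def h_def)
  also have "pmf_of_set {\<sigma>. \<sigma> permutes {..<n}}
      = map_pmf (perm_of_code n) (pmf_of_set (insertion_codes n))"
    using bij_betw_perm_of_code[of n]
    by (simp add: bij_betw_def map_pmf_of_set_inj finite_insertion_codes insertion_codes_nonempty)
  also have "pmf_of_set (insertion_codes n) = code_pmf n"
    unfolding code_pmf_def insertion_codes_def by (rule Pi_pmf_of_set[symmetric]) auto
  finally show ?thesis
    unfolding pmf.map_comp o_def
    by (auto intro!: map_pmf_cong rank_edges_perm_of_code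
        simp: code_pmf_def set_Pi_pmf PiE_dflt_def)
qed

lemma expectation_Pi_pmf_component:
  fixes f :: "'a \<Rightarrow> real"
  assumes "finite I" "i \<in> I"
  shows "measure_pmf.expectation (Pi_pmf I d p) (\<lambda>g. f (g i)) = measure_pmf.expectation (p i) f"
proof -
  have "measure_pmf.expectation (Pi_pmf I d p) (\<lambda>g. f (g i))
      = measure_pmf.expectation (map_pmf (\<lambda>g. g i) (Pi_pmf I d p)) f"
    by simp
  then show ?thesis
    using assms by (simp add: Pi_pmf_component)
qed

lemma expectation_Pi_pmf_sum:
  fixes f :: "'i \<Rightarrow> 'a \<Rightarrow> real"
  assumes "finite I" "\<And>i. i \<in> I \<Longrightarrow> finite (set_pmf (p i))"
  shows "measure_pmf.expectation (Pi_pmf I d p) (\<lambda>g. \<Sum>i\<in>I. f i (g i))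
       = (\<Sum>i\<in>I. measure_pmf.expectation (p i) (f i))"
proof -
  have "finite (set_pmf (Pi_pmf I d p))"
    using assms by (simp add: set_Pi_pmf finite_PiE_dflt)
  then have "measure_pmf.expectation (Pi_pmf I d p) (\<lambda>g. \<Sum>i\<in>I. f i (g i))
      = (\<Sum>i\<in>I. measure_pmf.expectation (Pi_pmf I d p) (\<lambda>g. f i (g i)))"
    by (intro Bochner_Integration.integral_sum integrable_measure_pmf_finite)
  also have "\<dots> = (\<Sum>i\<in>I. measure_pmf.expectation (p i) (f i))"
    using assms(1) by (intro sum.cong refl expectation_Pi_pmf_component)
  finally show ?thesis .
qed

lemma Pi_pmf_sum_Hoeffding_abs_ge:
  fixes f :: "'i \<Rightarrow> 'a \<Rightarrow> real"
  assumes I: "finite I" "I \<noteq> {}" and c: "c > 0" and \<epsilon>: "\<epsilon> \<ge> 0"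
    and range: "\<And>i x. i \<in> I \<Longrightarrow> x \<in> set_pmf (p i) \<Longrightarrow> f i x \<in> {a i..a i + c}"
  shows "measure_pmf.prob (Pi_pmf I d p)
           {g. \<bar>(\<Sum>i\<in>I. f i (g i)) - (\<Sum>i\<in>I. measure_pmf.expectation (p i) (f i))\<bar> \<ge> \<epsilon>}
         \<le> 2 * exp (- 2 * \<epsilon>\<^sup>2 / (real (card I) * c\<^sup>2))"
proof -
  let ?P = "Pi_pmf I d p"
  interpret Hoeffding_ineq ?P I "\<lambda>i g. f i (g i)" a "\<lambda>i. a i + c"
    "\<Sum>i\<in>I. measure_pmf.expectation (p i) (f i)"
  proof unfold_locales
    show "prob_space.indep_vars ?P (\<lambda>_. borel) (\<lambda>i g. f i (g i)) I"
      by (rule prob_space.indep_vars_compose2[OF measure_pmf.prob_space_axioms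
            indep_vars_Pi_pmf[OF I(1)]]) simp
    show "AE g in ?P. f i (g i) \<in> {a i..a i + c}" if "i \<in> I" for i
      using I that range by (intro AE_pmfI) (auto simp: set_Pi_pmf PiE_dflt_def)
    show "(\<Sum>i\<in>I. measure_pmf.expectation (p i) (f i))
        \<equiv> \<Sum>i\<in>I. measure_pmf.expectation ?P (\<lambda>g. f i (g i))"
      using I(1) by (intro eq_reflection sum.cong refl) (simp add: expectation_Pi_pmf_component)
  qed (use I in auto)
  have "(\<Sum>i\<in>I. (a i + c - a i)\<^sup>2) = real (card I) * c\<^sup>2" by simp
  moreover have "real (card I) * c\<^sup>2 > 0" using I c by (simp add: card_gt_0_iff)
  ultimately show ?thesis
    using Hoeffding_ineq_abs_ge[OF \<epsilon>] by simp
qed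

section \<open>The expected number of edges\<close>

definition mean_new_edges :: "nat \<Rightarrow> nat \<Rightarrow> real" where
  "mean_new_edges k r = (\<Sum>g\<le>r. real (new_edges k r g)) / real (Suc r)"

lemma sbv_expected_edges_eq_sum: "sbv_expected_edges k n = (\<Sum>r<n. mean_new_edges k r)"
proof -
  have "sbv_expected_edges k n
      = measure_pmf.expectation (code_pmf n) (\<lambda>g. \<Sum>r<n. real (new_edges k r (g r)))"
    by (simp add: sbv_expected_edges_def sbv_edges_pmf_eq_code_sum)
  also have "\<dots> = (\<Sum>r<n. measure_pmf.expectation (pmf_of_set {..r}) (\<lambda>g. real (new_edges k r g)))"
    unfolding code_pmf_def by (rule expectation_Pi_pmf_sum) auto
  finally show ?thesis
    by (simp add: integral_pmf_of_set mean_new_edges_def)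
qed

lemma sum_min_atMost:
  assumes "k \<le> r"
  shows "(\<Sum>g\<le>r. real (min (k + 1) g)) = real (k + 1) * (real r - real k / 2)"
proof -
  have "(\<Sum>g\<le>k + m. real (min (k + 1) g)) = real (k + 1) * (real (k + m) - real k / 2)" for m
  proof (induction m)
    case 0
    have "(\<Sum>g\<le>k. real (min (k + 1) g)) = (\<Sum>g\<le>k. real g)"
      by (intro sum.cong) auto
    also have "\<dots> = real k * (real k + 1) / 2"
      by (induction k) (auto simp: field_simps)
    finally show ?case by (simp add: field_simps)
  next
    case (Suc m)
    then show ?case by (simp add: field_simps)
  qed
  from this[of "r - k"] show ?thesis using assms by simp
qed

lemma mean_new_edges_small: "r \<le> k + 1 \<Longrightarrow> mean_new_edges k r = real r"
  by (simp add: mean_new_edges_def new_edges_def)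

lemma mean_new_edges_large:
  assumes "k + 1 \<le> r"
  shows "mean_new_edges k r = real (k + 1) * (2 - real (k + 2) / real (r + 1))"
proof -
  have "(\<Sum>g\<le>r. real (new_edges k r g))
      = (\<Sum>g\<le>r. real (min (k + 1) g)) + (\<Sum>g\<le>r. real (min (k + 1) (r - g)))"
    by (simp add: new_edges_def sum.distrib)
  also have "(\<Sum>g\<le>r. real (min (k + 1) (r - g))) = (\<Sum>g\<le>r. real (min (k + 1) g))"
    using sum.atLeastAtMost_rev[of "\<lambda>g. real (min (k + 1) (r - g))" 0 r]
    by (simp add: atLeast0AtMost)
  also have "(\<Sum>g\<le>r. real (min (k + 1) g)) = real (k + 1) * (real r - real k / 2)"
    using sum_min_atMost[of k r] assms by simp
  finally show ?thesis
    by (simp add: mean_new_edges_def field_simps)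
qed

lemma sum_mean_new_edges_small:
  "n \<le> k + 2 \<Longrightarrow> (\<Sum>r<n. mean_new_edges k r) = real (n choose 2)"
proof (induction n)
  case (Suc n)
  have "Suc n choose 2 = n + (n choose 2)"
    by (simp add: numeral_2_eq_2)
  with Suc show ?case by (simp add: mean_new_edges_small)
qed simp

definition expected_edges_closed_form :: "nat \<Rightarrow> nat \<Rightarrow> real" where
  "expected_edges_closed_form k n = 1/2 * real (k + 1) * (4 * real n - 3 * real k - 6
     - 2 * real (k + 2) * (\<Sum>l = k + 3..n. 1 / real l))"

lemma sum_mean_new_edges_large:
  assumes "k + 2 \<le> n"
  shows "(\<Sum>r<n. mean_new_edges k r) = expected_edges_closed_form k n"
  using assms
proof (induction n rule: dec_induct)
  case base
  have "2 * ((k + 2) choose 2) = (k + 1) * (k + 2)"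
    by (simp add: choose_two)
  then have "2 * real ((k + 2) choose 2) = real (k + 1) * real (k + 2)"
    by (metis of_nat_mult of_nat_numeral)
  moreover have "(\<Sum>r<k + 2. mean_new_edges k r) = real ((k + 2) choose 2)"
    by (rule sum_mean_new_edges_small) simp
  ultimately show ?case
    by (simp add: expected_edges_closed_form_def field_simps)
next
  case (step m)
  have harmonic_step:
    "(\<Sum>l = k + 3..Suc m. 1 / real l) = (\<Sum>l = k + 3..m. 1 / real l) + 1 / real (Suc m)"
    using step.hyps(1) by simp
  have "expected_edges_closed_form k (Suc m)
      = expected_edges_closed_form k m + real (k + 1) * (2 - real (k + 2) / real (Suc m))"
    unfolding expected_edges_closed_form_def harmonic_step by (simp add: field_simps)
  moreover have "mean_new_edges k m = real (k + 1) * (2 - real (k + 2) / real (Suc m))"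
    using step.hyps(1) by (simp add: mean_new_edges_large)
  ultimately show ?case
    using step.IH by simp
qed

lemma expected_edges_closed_form_asymp:
  "(\<lambda>m. 2 * real m - expected_edges_closed_form k m / real (k + 1)) \<in> O(\<lambda>m. 1 + ln (real m))"
proof (rule bigoI[of _ "real (3 * k + 7)"], rule eventually_sequentiallyI[of 1])
  fix m :: nat assume m: "1 \<le> m"
  define S where "S = (\<Sum>l = k + 3..m. 1 / real l)"
  have "S \<le> harm m"
    unfolding S_def harm_def inverse_eq_divide by (rule sum_mono2) auto
  also have "harm m \<le> 1 + ln (real m)"
    using euler_mascheroni_sequence_decreasing[of 1 m] m by (simp add: harm_def)
  finally have "S \<le> 1 + ln (real m)" .
  then have "(3 * real k + 6) / 2 + real (k + 2) * S
      \<le> (3 * real k + 6) / 2 + real (k + 2) * (1 + ln (real m))"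
    by (simp add: mult_left_mono)
  also have "\<dots> \<le> (3 * real k + 6) / 2 + real (k + 2) * (1 + ln (real m))
      + ((real k + 4) / 2 + real (2 * k + 5) * ln (real m))"
    using m by simp
  also have "\<dots> = real (3 * k + 7) * (1 + ln (real m))"
    by (simp add: field_simps)
  finally have bound: "(3 * real k + 6) / 2 + real (k + 2) * S
      \<le> real (3 * k + 7) * (1 + ln (real m))" .
  have "0 \<le> S"
    unfolding S_def by (auto intro: sum_nonneg)
  then have "0 \<le> (3 * real k + 6) / 2 + real (k + 2) * S"
    by simp
  moreover have "2 * real m - expected_edges_closed_form k m / real (k + 1)
      = (3 * real k + 6) / 2 + real (k + 2) * S"
    by (simp add: expected_edges_closed_form_def S_def field_simps)
  moreover have "0 \<le> 1 + ln (real m)"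
    using m by simp
  ultimately show "norm (2 * real m - expected_edges_closed_form k m / real (k + 1))
      \<le> real (3 * k + 7) * norm (1 + ln (real m))"
    using bound by simp
qed

lemma new_edges_bounds:
  "new_edges k r g \<in> {min (k + 1) r..min (k + 1) r + (k + 1)}"
  unfolding new_edges_def by auto

lemma sbv_edges_concentration:
  assumes "n \<ge> 1" "t \<ge> 0"
  shows "measure_pmf.prob (sbv_edges_pmf k n)
           {e. \<bar>real e - sbv_expected_edges k n\<bar> > real (k + 1) * t}
         \<le> 2 * exp (- 2 * t\<^sup>2 / real n)"
proof -
  let ?X = "\<lambda>r g. real (new_edges k r g)"
  have expectation: "sbv_expected_edges k n
      = (\<Sum>r<n. measure_pmf.expectation (pmf_of_set {..r}) (?X r))"
    unfolding sbv_expected_edges_def sbv_edges_pmf_eq_code_sum code_pmf_def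
    by (simp, rule expectation_Pi_pmf_sum) auto
  have "measure_pmf.prob (sbv_edges_pmf k n)
          {e. \<bar>real e - sbv_expected_edges k n\<bar> > real (k + 1) * t}
      \<le> measure_pmf.prob (code_pmf n)
          {g. \<bar>(\<Sum>r<n. ?X r (g r)) - sbv_expected_edges k n\<bar> \<ge> real (k + 1) * t}"
    by (auto simp: sbv_edges_pmf_eq_code_sum intro!: measure_pmf.finite_measure_mono)
  also have "\<dots> \<le> 2 * exp (- 2 * (real (k + 1) * t)\<^sup>2 / (real (card {..<n}) * (real (k + 1))\<^sup>2))"
    unfolding code_pmf_def expectation
  proof (rule Pi_pmf_sum_Hoeffding_abs_ge[where a = "\<lambda>r. real (min (k + 1) r)"])
    fix r g
    have "real (min (k + 1) r) \<le> ?X r g" "?X r g \<le> real (min (k + 1) r + (k + 1))"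
      using new_edges_bounds[of k r g] by (auto intro: of_nat_mono)
    then show "?X r g \<in> {real (min (k + 1) r)..real (min (k + 1) r) + real (k + 1)}"
      by simp
  qed (use assms in \<open>auto simp: lessThan_empty_iff\<close>)
  also have "\<dots> = 2 * exp (- 2 * t\<^sup>2 / real n)"
    by (simp add: power_mult_distrib)
  finally show ?thesis .
qed

lemma sbv_expected_edges_asymp:
  "(\<lambda>m. 2 * real m - sbv_expected_edges k m / real (k + 1)) \<in> o(\<lambda>m. real m)"
proof -
  have "eventually (\<lambda>m. 2 * real m - sbv_expected_edges k m / real (k + 1)
      = 2 * real m - expected_edges_closed_form k m / real (k + 1)) sequentially"
    by (intro eventually_sequentiallyI[of "k + 2"])
      (simp add: sbv_expected_edges_eq_sum sum_mean_new_edges_large)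
  moreover have "(\<lambda>m::nat. 1 + ln (real m)) \<in> o(\<lambda>m. real m)"
    by real_asymp
  then have "(\<lambda>m. 2 * real m - expected_edges_closed_form k m / real (k + 1)) \<in> o(\<lambda>m. real m)"
    by (rule landau_o.big_small_trans[OF expected_edges_closed_form_asymp])
  ultimately show ?thesis
    by (subst landau_o.small.in_cong)
qed

theorem mainTheorem15:
  fixes k n :: nat
  assumes "n \<ge> 1"
  shows "(n \<le> k + 2 \<longrightarrow> sbv_expected_edges k n = real (n choose 2))
    \<and> (n \<ge> k + 3 \<longrightarrow> sbv_expected_edges k n =
          1/2 * real (k + 1) * (4 * real n - 3 * real k - 6
             - 2 * real (k + 2) * (\<Sum>l = k + 3..n. 1 / real l)))
    \<and> (\<lambda>m. 2 * real m - sbv_expected_edges k m / real (k + 1)) \<in> o(\<lambda>m. real m)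
    \<and> (\<forall>t::real. t \<ge> 0 \<longrightarrow>
         measure_pmf.prob (sbv_edges_pmf k n)
            {e. \<bar>real e - sbv_expected_edges k n\<bar> > real (k + 1) * t}
         \<le> 2 * exp (- 2 * t\<^sup>2 / real n))"
proof (intro conjI impI allI)
  show "sbv_expected_edges k n = real (n choose 2)" if "n \<le> k + 2"
    using that by (simp add: sbv_expected_edges_eq_sum sum_mean_new_edges_small)
  show "sbv_expected_edges k n = 1/2 * real (k + 1) * (4 * real n - 3 * real k - 6
      - 2 * real (k + 2) * (\<Sum>l = k + 3..n. 1 / real l))" if "n \<ge> k + 3"
    using that sum_mean_new_edges_large[of k n]
    by (simp add: sbv_expected_edges_eq_sum expected_edges_closed_form_def)
  show "(\<lambda>m. 2 * real m - sbv_expected_edges k m / real (k + 1)) \<in> o(\<lambda>m. real m)"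
    by (rule sbv_expected_edges_asymp)
  show "measure_pmf.prob (sbv_edges_pmf k n)
      {e. \<bar>real e - sbv_expected_edges k n\<bar> > real (k + 1) * t} \<le> 2 * exp (- 2 * t\<^sup>2 / real n)"
    if "t \<ge> 0" for t :: real
    using assms that by (rule sbv_edges_concentration)
qed

end
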